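(* A graph $G$ has exactly one Grundy total dominating set (i.e., is a unique Grundy total domination graph) if and only if $\gamma_{gr}^{t}(G)=n(G)-i(G)$, where $n(G)$ is the number of vertices and $i(G)$ the number of isolated vertices of $G$.
   Context: For a graph $G$, $N(v)$ denotes the open neighborhood of $v$. A sequence $(v_1,\ldots,v_k)$ of distinct vertices is an open neighborhood sequence if $N(v_i)\setminus\bigcup_{j=1}^{i-1}N(v_j)\neq\emptyset$ for each $i\in[k]$. The Grundy total domination number $\gamma_{gr}^{t}(G)$ is the maximum length of an open neighborhood sequence; the vertex set of such a maximum-length sequence is a Grundy total dominating set. *)

theory Defs
  imports Main
begin

definition simple_graph :: "'a set \<Rightarrow> ('a \<Rightarrow> 'a \<Rightarrow> bool) \<Rightarrow> bool" where
  "simple_graph V E \<longleftrightarrow> finite V \<and>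
     (\<forall>u v. E u v \<longrightarrow> u \<in> V \<and> v \<in> V) \<and>
     (\<forall>u v. E u v \<longrightarrow> E v u) \<and> (\<forall>v. \<not> E v v)"

definition open_nbhd :: "'a set \<Rightarrow> ('a \<Rightarrow> 'a \<Rightarrow> bool) \<Rightarrow> 'a \<Rightarrow> 'a set" where
  "open_nbhd V E v = {u \<in> V. E v u}"

definition open_nbhd_seq :: "'a set \<Rightarrow> ('a \<Rightarrow> 'a \<Rightarrow> bool) \<Rightarrow> 'a list \<Rightarrow> bool" where
  "open_nbhd_seq V E xs \<longleftrightarrow> distinct xs \<and> set xs \<subseteq> V \<and>
     (\<forall>i < length xs. open_nbhd V E (xs ! i) - (\<Union>j<i. open_nbhd V E (xs ! j)) \<noteq> {})"

definition grundy_total_dom_number :: "'a set \<Rightarrow> ('a \<Rightarrow> 'a \<Rightarrow> bool) \<Rightarrow> nat" where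
  "grundy_total_dom_number V E = Max {length xs | xs. open_nbhd_seq V E xs}"

definition grundy_total_dom_sets :: "'a set \<Rightarrow> ('a \<Rightarrow> 'a \<Rightarrow> bool) \<Rightarrow> 'a set set" where
  "grundy_total_dom_sets V E =
     {set xs | xs. open_nbhd_seq V E xs \<and> length xs = grundy_total_dom_number V E}"

definition isolated_vertices :: "'a set \<Rightarrow> ('a \<Rightarrow> 'a \<Rightarrow> bool) \<Rightarrow> 'a set" where
  "isolated_vertices V E = {v \<in> V. open_nbhd V E v = {}}"

end

theory Submission
  imports Defs
begin

text \<open>Every open neighbourhood sequence consists of distinct non-isolated vertices, so
  \<open>\<gamma>\<^sub>g\<^sub>r\<^sup>t(G) \<le> n(G) - i(G)\<close>; under equality the only Grundy total dominating set is the
  set of all non-isolated vertices. Conversely, if \<open>x\<^sub>1, \<dots>, x\<^sub>k\<close> is a Grundy sequence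
  and \<open>y\<^sub>i\<close> is a vertex first dominated by \<open>x\<^sub>i\<close>, then \<open>y\<^sub>k, \<dots>, y\<^sub>1\<close> is again an open
  neighbourhood sequence, with \<open>y\<^sub>i\<close> first dominating \<open>x\<^sub>i\<close>. Any neighbour of the
  sequence can be chosen as one of the \<open>y\<^sub>i\<close>, so a unique Grundy total dominating set
  \<open>S\<close> contains its own neighbourhood. A non-isolated vertex outside \<open>S\<close> would then
  have a neighbour not dominated by \<open>S\<close> and could be appended to the sequence.\<close>

lemma simple_graph_sym: "simple_graph V E \<Longrightarrow> E u v \<Longrightarrow> E v u"
  unfolding simple_graph_def by blast

lemma simple_graph_edge_in: "simple_graph V E \<Longrightarrow> E u v \<Longrightarrow> u \<in> V \<and> v \<in> V"
  unfolding simple_graph_def by blast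

lemma open_nbhd_seq_iff:
  "open_nbhd_seq V E xs \<longleftrightarrow> distinct xs \<and> set xs \<subseteq> V \<and>
     (\<forall>i<length xs. \<exists>u\<in>V. E (xs!i) u \<and> (\<forall>j<i. \<not> E (xs!j) u))"
  unfolding open_nbhd_seq_def open_nbhd_def by blast

lemma open_nbhd_seq_subset_non_isolated:
  assumes "open_nbhd_seq V E xs"
  shows "set xs \<subseteq> V - isolated_vertices V E"
proof
  fix x assume "x \<in> set xs"
  then obtain i where "i < length xs" "xs!i = x" by (auto simp: in_set_conv_nth)
  then have "open_nbhd V E x \<noteq> {}"
    using assms unfolding open_nbhd_seq_def by blast
  with \<open>x \<in> set xs\<close> assms show "x \<in> V - isolated_vertices V E"
    unfolding open_nbhd_seq_def isolated_vertices_def by blast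
qed

lemma card_non_isolated:
  "finite V \<Longrightarrow> card (V - isolated_vertices V E) = card V - card (isolated_vertices V E)"
  by (rule card_Diff_subset) (auto simp: isolated_vertices_def intro: finite_subset)

lemma open_nbhd_seq_length_le_card:
  assumes "simple_graph V E" "open_nbhd_seq V E xs"
  shows "length xs \<le> card V"
proof -
  have "length xs = card (set xs)"
    using assms(2) distinct_card unfolding open_nbhd_seq_def by metis
  also have "\<dots> \<le> card V"
    using assms unfolding open_nbhd_seq_def simple_graph_def by (simp add: card_mono)
  finally show ?thesis .
qed

lemma
  assumes "simple_graph V E"
  shows grundy_total_dom_number_attained:
      "\<exists>xs. open_nbhd_seq V E xs \<and> length xs = grundy_total_dom_number V E"
    and open_nbhd_seq_length_le_grundy:
      "open_nbhd_seq V E ys \<Longrightarrow> length ys \<le> grundy_total_dom_number V E"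
proof -
  let ?L = "{length xs | xs. open_nbhd_seq V E xs}"
  have fin: "finite ?L"
    by (rule finite_subset[of _ "{..card V}"])
      (use open_nbhd_seq_length_le_card[OF assms] in auto)
  have ne: "?L \<noteq> {}" using open_nbhd_seq_iff[of V E "[]"] by auto
  show "\<exists>xs. open_nbhd_seq V E xs \<and> length xs = grundy_total_dom_number V E"
    using Max_in[OF fin ne] unfolding grundy_total_dom_number_def by auto
  show "open_nbhd_seq V E ys \<Longrightarrow> length ys \<le> grundy_total_dom_number V E"
    using Max_ge[OF fin] unfolding grundy_total_dom_number_def by auto
qed

lemma grundy_total_dom_setD:
  assumes "A \<in> grundy_total_dom_sets V E"
  shows "card A = grundy_total_dom_number V E" "A \<subseteq> V - isolated_vertices V E"
proof -
  obtain xs where xs: "A = set xs" "open_nbhd_seq V E xs"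
      "length xs = grundy_total_dom_number V E"
    using assms unfolding grundy_total_dom_sets_def by blast
  then show "card A = grundy_total_dom_number V E"
    using distinct_card unfolding open_nbhd_seq_def by metis
  show "A \<subseteq> V - isolated_vertices V E"
    using xs open_nbhd_seq_subset_non_isolated by blast
qed

lemma grundy_total_dom_number_le_non_isolated:
  assumes "simple_graph V E"
  shows "grundy_total_dom_number V E \<le> card (V - isolated_vertices V E)"
proof -
  obtain xs where xs: "open_nbhd_seq V E xs" "length xs = grundy_total_dom_number V E"
    using grundy_total_dom_number_attained[OF assms] by blast
  then have "set xs \<in> grundy_total_dom_sets V E"
    unfolding grundy_total_dom_sets_def by blast
  moreover have "finite (V - isolated_vertices V E)"
    using assms unfolding simple_graph_def by blast
  ultimately show ?thesis
    using grundy_total_dom_setD card_mono by metis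
qed

lemma open_nbhd_seq_rev_footprints:
  assumes sg: "simple_graph V E" and ons: "open_nbhd_seq V E xs"
    and g: "\<And>i. i < length xs \<Longrightarrow> g i \<in> V \<and> E (xs!i) (g i) \<and> (\<forall>j<i. \<not> E (xs!j) (g i))"
  shows "open_nbhd_seq V E (rev (map g [0..<length xs]))"
proof -
  let ?k = "length xs"
  let ?ys = "rev (map g [0..<?k])"
  have ys_nth: "?ys ! m = g (?k - 1 - m)" if "m < ?k" for m
    using that by (simp add: rev_nth)
  have "inj_on g {0..<?k}"
    by (rule inj_onI) (metis atLeastLessThan_iff g linorder_neqE_nat)
  then have "distinct ?ys" by (simp add: distinct_map)
  moreover have "set ?ys \<subseteq> V" using g by auto
  moreover have "\<exists>u\<in>V. E (?ys!m) u \<and> (\<forall>j<m. \<not> E (?ys!j) u)" if m: "m < ?k" for m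
  proof -
    let ?i = "?k - 1 - m"
    have "xs ! ?i \<in> V" using ons m unfolding open_nbhd_seq_def by auto
    moreover have "E (?ys!m) (xs ! ?i)"
      using g[of ?i] m ys_nth simple_graph_sym[OF sg] by simp
    moreover have "\<not> E (?ys!j) (xs ! ?i)" if "j < m" for j
    proof
      assume "E (?ys!j) (xs ! ?i)"
      then have "E (xs ! ?i) (g (?k - 1 - j))"
        using simple_graph_sym[OF sg] ys_nth that m by simp
      moreover have "?i < ?k - 1 - j" "?k - 1 - j < ?k" using that m by auto
      ultimately show False using g by blast
    qed
    ultimately show ?thesis by blast
  qed
  ultimately show ?thesis unfolding open_nbhd_seq_iff by simp
qed

text \<open>The footprint of the first \<open>xs ! i\<close> adjacent to \<open>a\<close> may be chosen to be \<open>a\<close>.\<close>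

lemma open_nbhd_seq_footprint_choice:
  assumes sg: "simple_graph V E" and ons: "open_nbhd_seq V E xs"
    and "i < length xs" "E (xs!i) a"
  shows "\<exists>ys. open_nbhd_seq V E ys \<and> length ys = length xs \<and> a \<in> set ys"
proof -
  let ?k = "length xs"
  define i0 where "i0 = (LEAST i. i < ?k \<and> E (xs!i) a)"
  have i0: "i0 < ?k" "E (xs!i0) a"
    using LeastI[of "\<lambda>i. i < ?k \<and> E (xs!i) a" i] assms(3,4) unfolding i0_def by auto
  have i0_min: "\<not> E (xs!j) a" if "j < i0" for j
    using not_less_Least[of j "\<lambda>i. i < ?k \<and> E (xs!i) a"] that i0(1) unfolding i0_def by auto
  define g where "g j = (if j = i0 then a else
      (SOME u. u \<in> V \<and> E (xs!j) u \<and> (\<forall>l<j. \<not> E (xs!l) u)))" for j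
  have g: "g j \<in> V \<and> E (xs!j) (g j) \<and> (\<forall>l<j. \<not> E (xs!l) (g j))" if "j < ?k" for j
  proof (cases "j = i0")
    case True
    then show ?thesis using i0 i0_min simple_graph_edge_in[OF sg] unfolding g_def by auto
  next
    case False
    have "\<exists>u. u \<in> V \<and> E (xs!j) u \<and> (\<forall>l<j. \<not> E (xs!l) u)"
      using ons that unfolding open_nbhd_seq_iff by blast
    from someI_ex[OF this] False show ?thesis unfolding g_def by simp
  qed
  have "a \<in> set (rev (map g [0..<?k]))"
    using i0(1) by (auto simp: g_def intro!: image_eqI[of a _ i0])
  with open_nbhd_seq_rev_footprints[OF sg ons g] show ?thesis by fastforce
qed

lemma unique_grundy_total_dom_set_closed:
  assumes sg: "simple_graph V E" and uniq: "grundy_total_dom_sets V E = {S}"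
    and "x \<in> S" "E x a"
  shows "a \<in> S"
proof -
  obtain xs where xs: "S = set xs" "open_nbhd_seq V E xs"
      "length xs = grundy_total_dom_number V E"
    using uniq unfolding grundy_total_dom_sets_def by blast
  with assms(3,4) obtain i where "i < length xs" "E (xs!i) a"
    by (auto simp: in_set_conv_nth)
  then obtain ys where ys: "open_nbhd_seq V E ys" "length ys = length xs" "a \<in> set ys"
    using open_nbhd_seq_footprint_choice[OF sg xs(2)] by blast
  then have "set ys \<in> grundy_total_dom_sets V E"
    using xs(3) unfolding grundy_total_dom_sets_def by auto
  with uniq ys(3) show ?thesis by simp
qed

lemma open_nbhd_seq_snoc:
  assumes "open_nbhd_seq V E xs" "v \<in> V" "v \<notin> set xs" "w \<in> V" "E v w"
    and "\<forall>x\<in>set xs. \<not> E x w"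
  shows "open_nbhd_seq V E (xs @ [v])"
proof -
  have "\<exists>u\<in>V. E ((xs @ [v]) ! i) u \<and> (\<forall>j<i. \<not> E ((xs @ [v]) ! j) u)"
    if "i < length (xs @ [v])" for i
  proof (cases "i < length xs")
    case True
    then show ?thesis using assms(1) unfolding open_nbhd_seq_iff by (simp add: nth_append)
  next
    case False
    with that have "i = length xs" by simp
    then show ?thesis using assms(4-6) by (auto simp: nth_append)
  qed
  with assms(1-3) show ?thesis unfolding open_nbhd_seq_iff by simp
qed

lemma non_isolated_subset_unique_grundy_total_dom_set:
  assumes sg: "simple_graph V E" and uniq: "grundy_total_dom_sets V E = {S}"
  shows "V - isolated_vertices V E \<subseteq> S"
proof
  fix v assume v: "v \<in> V - isolated_vertices V E"
  obtain xs where xs: "S = set xs" "open_nbhd_seq V E xs"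
      "length xs = grundy_total_dom_number V E"
    using uniq unfolding grundy_total_dom_sets_def by blast
  obtain w where w: "E v w" using v unfolding isolated_vertices_def open_nbhd_def by auto
  show "v \<in> S"
  proof (rule ccontr)
    assume v_notin: "v \<notin> S"
    have "\<exists>x\<in>S. E x w"
    proof (rule ccontr)
      assume "\<not> ?thesis"
      then have "open_nbhd_seq V E (xs @ [v])"
        using open_nbhd_seq_snoc[OF xs(2)] xs(1) v v_notin w simple_graph_edge_in[OF sg w]
        by blast
      from open_nbhd_seq_length_le_grundy[OF sg this] xs(3) show False by simp
    qed
    then have "w \<in> S"
      using unique_grundy_total_dom_set_closed[OF sg uniq] by blast
    from unique_grundy_total_dom_set_closed[OF sg uniq this simple_graph_sym[OF sg w]]
    show False using v_notin by blast
  qed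
qed

theorem corollary5p3:
  assumes "simple_graph V E"
  shows "card (grundy_total_dom_sets V E) = 1 \<longleftrightarrow>
         grundy_total_dom_number V E = card V - card (isolated_vertices V E)"
proof -
  let ?V' = "V - isolated_vertices V E"
  have fin: "finite ?V'" using assms unfolding simple_graph_def by blast
  have card_V': "card ?V' = card V - card (isolated_vertices V E)"
    using assms card_non_isolated unfolding simple_graph_def by blast
  show ?thesis
  proof
    assume "card (grundy_total_dom_sets V E) = 1"
    then obtain S where S: "grundy_total_dom_sets V E = {S}"
      by (auto simp: card_1_singleton_iff)
    then have "S = ?V'"
      using non_isolated_subset_unique_grundy_total_dom_set[OF assms S]
        grundy_total_dom_setD(2)[of S V E] by blast
    then have "grundy_total_dom_number V E = card ?V'"
      using grundy_total_dom_setD(1)[of S V E] S by simp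
    with card_V' show "grundy_total_dom_number V E = card V - card (isolated_vertices V E)"
      by simp
  next
    assume "grundy_total_dom_number V E = card V - card (isolated_vertices V E)"
    with card_V' have card_eq: "grundy_total_dom_number V E = card ?V'" by simp
    have only_V': "A = ?V'" if "A \<in> grundy_total_dom_sets V E" for A
      using card_subset_eq[OF fin grundy_total_dom_setD(2)[OF that]]
        grundy_total_dom_setD(1)[OF that] card_eq by simp
    obtain xs where "open_nbhd_seq V E xs" "length xs = grundy_total_dom_number V E"
      using grundy_total_dom_number_attained[OF assms] by blast
    then have "set xs \<in> grundy_total_dom_sets V E"
      unfolding grundy_total_dom_sets_def by blast
    then have "?V' \<in> grundy_total_dom_sets V E" using only_V' by simp
    with only_V' have "grundy_total_dom_sets V E = {?V'}" by blast
    then show "card (grundy_total_dom_sets V E) = 1" by simp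
  qed
qed

end
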